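(* Suppose a set $S\subseteq\mathbb{N}^{\mathbb{N}}$ is defined by some sentence $\forall x\,\exists y\,\phi$ of $\mathscr{L}_{\max}$ and also by some sentence $\exists x\,\forall y\,\psi$ of $\mathscr{L}_{\max}$, where $\phi$ and $\psi$ are quantifier-free. Then $S$ is guessable.
   Context: A function $G:\mathbb{N}^{<\mathbb{N}}\to\{0,1\}$ ($\mathbb{N}^{<\mathbb{N}}$ = finite sequences of naturals) is a guesser for $S\subseteq\mathbb{N}^{\mathbb{N}}$ if for every $f:\mathbb{N}\to\mathbb{N}$ there is $m>0$ such that for all $n>m$, $G(f(0),\ldots,f(n))$ equals $1$ if $f\in S$ and $0$ if $f\notin S$; $S$ is guessable if it has a guesser. The language $\mathscr{L}_{\max}$ is a first-order language extended with ellipses: constant symbols $\mathbf{n}$ (also $\bar n$) for each $n\in\mathbb{N}$; an $n$-ary function symbol $\tilde w$ for each $w:\mathbb{N}^n\to\mathbb{N}$ ($n>0$); an $n$-ary predicate symbol $\tilde p$ for each $p\subseteq\mathbb{N}^n$ ($n>0$); an $\mathbb{N}^{<\mathbb{N}}$-ary function symbol $\tilde G$ for each $G:\mathbb{N}^{<\mathbb{N}}\to\mathbb{N}$ (applicable to any finite number of arguments); a unary function symbol $\mathbf{f}$; and a symbol $\cdots_x$ for each variable $x$. Besides the usual terms, for $\mathbb{N}^{<\mathbb{N}}$-ary $G$, terms $u,v$ and variable $x$, $G(u(\mathbf{0}),\cdots_x,u(v))$ is a term with free variables $(FV(u)\setminus\{x\})\cup FV(v)$. Formulas are built as usual. For $f:\mathbb{N}\to\mathbb{N}$,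 $\mathscr{M}_f$ is the structure on $\mathbb{N}$ interpreting every symbol as the object it names and $\mathbf{f}$ as $f$; terms are evaluated as usual, plus $G(u(\mathbf{0}),\cdots_x,u(v))^{s}=G\big(u(x|\mathbf{0})^{s},\ldots,u(x|\overline{v^{s}})^{s}\big)$ under an assignment $s$, where $u(x|c)$ is substitution of the constant $c$ for $x$ in $u$. A sentence $\phi$ defines $S\subseteq\mathbb{N}^{\mathbb{N}}$ if for every $f:\mathbb{N}\to\mathbb{N}$, $\mathscr{M}_f\models\phi$ iff $f\in S$. *)

theory Defs
  imports Main
begin

text \<open>Fn w ts covers both the n-ary function symbols (w applied to exactly n arguments)
  and the N^{<N}-ary symbols G (applied to any finite number of arguments);
  F t is the unary symbol f; Ell G u x v is G(u(0), ..._x, u(v)).\<close>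
datatype trm =
    Var nat
  | Cst nat
  | Fn "nat list \<Rightarrow> nat" "trm list"
  | F trm
  | Ell "nat list \<Rightarrow> nat" trm nat trm

datatype fml =
    Eq trm trm
  | Pred "nat list \<Rightarrow> bool" "trm list"
  | Neg fml
  | Conj fml fml
  | Disj fml fml
  | Imp fml fml
  | All nat fml
  | Ex nat fml

fun fvt :: "trm \<Rightarrow> nat set" where
  "fvt (Var x) = {x}"
| "fvt (Cst n) = {}"
| "fvt (Fn w ts) = (\<Union>t\<in>set ts. fvt t)"
| "fvt (F t) = fvt t"
| "fvt (Ell G u x v) = (fvt u - {x}) \<union> fvt v"

fun fvf :: "fml \<Rightarrow> nat set" where
  "fvf (Eq a b) = fvt a \<union> fvt b"
| "fvf (Pred p ts) = (\<Union>t\<in>set ts. fvt t)"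
| "fvf (Neg a) = fvf a"
| "fvf (Conj a b) = fvf a \<union> fvf b"
| "fvf (Disj a b) = fvf a \<union> fvf b"
| "fvf (Imp a b) = fvf a \<union> fvf b"
| "fvf (All x a) = fvf a - {x}"
| "fvf (Ex x a) = fvf a - {x}"

fun qfree :: "fml \<Rightarrow> bool" where
  "qfree (Eq a b) = True"
| "qfree (Pred p ts) = True"
| "qfree (Neg a) = qfree a"
| "qfree (Conj a b) = (qfree a \<and> qfree b)"
| "qfree (Disj a b) = (qfree a \<and> qfree b)"
| "qfree (Imp a b) = (qfree a \<and> qfree b)"
| "qfree (All x a) = False"
| "qfree (Ex x a) = False"

text \<open>Evaluation in M_f under assignment s. Substituting the constant c for x in u
  and evaluating under s is the same as evaluating u under s(x := c).\<close>
fun evalt :: "(nat \<Rightarrow> nat) \<Rightarrow> (nat \<Rightarrow> nat) \<Rightarrow> trm \<Rightarrow> nat" where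
  "evalt f s (Var x) = s x"
| "evalt f s (Cst n) = n"
| "evalt f s (Fn w ts) = w (map (evalt f s) ts)"
| "evalt f s (F t) = f (evalt f s t)"
| "evalt f s (Ell G u x v) = G (map (\<lambda>i. evalt f (s(x := i)) u) [0..<Suc (evalt f s v)])"

fun sat :: "(nat \<Rightarrow> nat) \<Rightarrow> (nat \<Rightarrow> nat) \<Rightarrow> fml \<Rightarrow> bool" where
  "sat f s (Eq a b) = (evalt f s a = evalt f s b)"
| "sat f s (Pred p ts) = p (map (evalt f s) ts)"
| "sat f s (Neg a) = (\<not> sat f s a)"
| "sat f s (Conj a b) = (sat f s a \<and> sat f s b)"
| "sat f s (Disj a b) = (sat f s a \<or> sat f s b)"
| "sat f s (Imp a b) = (sat f s a \<longrightarrow> sat f s b)"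
| "sat f s (All x a) = (\<forall>n. sat f (s(x := n)) a)"
| "sat f s (Ex x a) = (\<exists>n. sat f (s(x := n)) a)"

definition sentence :: "fml \<Rightarrow> bool" where
  "sentence \<phi> \<longleftrightarrow> fvf \<phi> = {}"

definition defines_set :: "fml \<Rightarrow> (nat \<Rightarrow> nat) set \<Rightarrow> bool" where
  "defines_set \<phi> S \<longleftrightarrow> sentence \<phi> \<and> (\<forall>f s. sat f s \<phi> \<longleftrightarrow> f \<in> S)"

definition guesser :: "(nat list \<Rightarrow> nat) \<Rightarrow> (nat \<Rightarrow> nat) set \<Rightarrow> bool" where
  "guesser G S \<longleftrightarrow> (\<forall>\<sigma>. G \<sigma> \<in> {0, 1}) \<and>
     (\<forall>f. \<exists>m>0. \<forall>n>m. G (map f [0..<Suc n]) = (if f \<in> S then 1 else 0))"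

definition guessable :: "(nat \<Rightarrow> nat) set \<Rightarrow> bool" where
  "guessable S \<longleftrightarrow> (\<exists>G. guesser G S)"

end

theory Submission
  imports Defs
begin

text \<open>The value of a term, and the truth of a quantifier-free formula, in M_f depend
  only on a finite initial segment of f. Hence a sentence \<exists>x \<forall>y \<psi> defining S presents
  membership as the existence of a witness x that no prefix of f refutes, and the
  sentence \<forall>x \<exists>y \<phi> presents non-membership in the same way. After interleaving the
  two kinds of witness, the least candidate not yet refuted by f(0), ..., f(n)
  stabilises on the least true witness, whose kind is the correct guess.\<close>

definition determined_by_prefix :: "((nat \<Rightarrow> 'a) \<Rightarrow> 'b) \<Rightarrow> (nat \<Rightarrow> 'a) \<Rightarrow> bool" where
  "determined_by_prefix \<Phi> f \<longleftrightarrow>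
     (\<forall>\<^sub>F N in sequentially. \<forall>g. (\<forall>i<N. g i = f i) \<longrightarrow> \<Phi> g = \<Phi> f)"

lemma determined_by_prefix_const: "determined_by_prefix (\<lambda>g. c) f"
  by (simp add: determined_by_prefix_def)

lemma determined_by_prefix_comp:
  "determined_by_prefix \<Phi> f \<Longrightarrow> determined_by_prefix (\<lambda>g. h (\<Phi> g)) f"
  unfolding determined_by_prefix_def by (erule eventually_mono) metis

lemma determined_by_prefix_comp2:
  assumes "determined_by_prefix \<Phi> f" and "determined_by_prefix \<Psi> f"
  shows "determined_by_prefix (\<lambda>g. h (\<Phi> g) (\<Psi> g)) f"
  using eventually_conj[OF assms[unfolded determined_by_prefix_def]]
  unfolding determined_by_prefix_def by (rule eventually_mono) metis

lemma determined_by_prefix_map: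
  assumes "\<And>x. x \<in> set xs \<Longrightarrow> determined_by_prefix (\<lambda>g. \<Phi> g x) f"
  shows "determined_by_prefix (\<lambda>g. map (\<Phi> g) xs) f"
proof -
  have "\<forall>\<^sub>F N in sequentially. \<forall>x\<in>set xs. \<forall>g. (\<forall>i<N. g i = f i) \<longrightarrow> \<Phi> g x = \<Phi> f x"
    using assms unfolding determined_by_prefix_def by (intro eventually_ball_finite) auto
  then show ?thesis
    unfolding determined_by_prefix_def by (rule eventually_mono) (blast intro: map_cong)
qed

lemma determined_by_prefix_apply:
  assumes "determined_by_prefix \<Phi> f"
  shows "determined_by_prefix (\<lambda>g. g (\<Phi> g)) f"
  using eventually_conj[OF assms[unfolded determined_by_prefix_def] eventually_gt_at_top[of "\<Phi> f"]]
  unfolding determined_by_prefix_def by (rule eventually_mono) metis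

text \<open>The length of the list may itself depend on the argument: once the prefix fixes
  V g = V f, only the finitely many values U g 0, ..., U g (V f) matter.\<close>
lemma determined_by_prefix_map_upt:
  assumes "determined_by_prefix V f"
    and "\<And>i. i \<le> V f \<Longrightarrow> determined_by_prefix (\<lambda>g. U g i) f"
  shows "determined_by_prefix (\<lambda>g. map (U g) [0..<Suc (V g)]) f"
proof -
  have "determined_by_prefix (\<lambda>g. (V g, map (U g) [0..<Suc (V f)])) f"
    using assms by (intro determined_by_prefix_comp2[where h = Pair] determined_by_prefix_map) auto
  then show ?thesis
    unfolding determined_by_prefix_def by (rule eventually_mono) (metis prod.inject)
qed

lemma determined_by_prefix_evalt: "determined_by_prefix (\<lambda>g. evalt g s t) f"
proof (induction t arbitrary: s)
  case (Fn w ts)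
  then show ?case
    by (auto intro!: determined_by_prefix_comp[where h = w] determined_by_prefix_map)
next
  case (F t)
  then show ?case by (simp add: determined_by_prefix_apply)
next
  case (Ell G u x v)
  have "determined_by_prefix (\<lambda>g. map (\<lambda>i. evalt g (s(x := i)) u) [0..<Suc (evalt g s v)]) f"
    using Ell.IH by (intro determined_by_prefix_map_upt)
  then show ?case
    unfolding evalt.simps by (rule determined_by_prefix_comp)
qed (simp_all add: determined_by_prefix_const)

lemma determined_by_prefix_sat:
  "qfree \<phi> \<Longrightarrow> determined_by_prefix (\<lambda>g. sat g s \<phi>) f"
proof (induction \<phi>)
  case (Eq a b)
  show ?case
    by (auto intro!: determined_by_prefix_comp2[where h = "(=)"] determined_by_prefix_evalt)
next
  case (Pred p ts)
  show ?case
    by (auto intro!: determined_by_prefix_comp[where h = p] determined_by_prefix_map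
        determined_by_prefix_evalt)
next
  case (Neg a)
  then show ?case by (auto intro!: determined_by_prefix_comp[where h = Not])
next
  case (Conj a b)
  then show ?case by (auto intro!: determined_by_prefix_comp2[where h = "(\<and>)"])
next
  case (Disj a b)
  then show ?case by (auto intro!: determined_by_prefix_comp2[where h = "(\<or>)"])
next
  case (Imp a b)
  then show ?case by (auto intro!: determined_by_prefix_comp2[where h = "(\<longrightarrow>)"])
qed simp_all

text \<open>Quantifying over all extensions of the prefix, rather than testing one of them,
  ensures that a true witness is never refuted.\<close>
definition refutes :: "((nat \<Rightarrow> 'a) \<Rightarrow> nat \<Rightarrow> 'b \<Rightarrow> bool) \<Rightarrow> 'a list \<Rightarrow> nat \<Rightarrow> bool" where
  "refutes R \<sigma> e \<longleftrightarrow> (\<exists>d. \<forall>g. (\<forall>i<length \<sigma>. g i = \<sigma> ! i) \<longrightarrow> \<not> R g e d)"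

lemma refutes_prefix_iff:
  "refutes R (map f [0..<n]) e \<longleftrightarrow> (\<exists>d. \<forall>g. (\<forall>i<n. g i = f i) \<longrightarrow> \<not> R g e d)"
  by (simp add: refutes_def)

text \<open>A true witness is never refuted by a prefix of f, and each of the finitely many
  smaller candidates fails at some d, which a long enough prefix already decides.\<close>
lemma eventually_Least_unrefuted:
  assumes determined: "\<And>e d. determined_by_prefix (\<lambda>g. R g e d) f"
    and witness: "\<forall>d. R f e\<^sub>0 d"
  shows "\<forall>\<^sub>F n in sequentially.
           (LEAST e. \<not> refutes R (map f [0..<n]) e) = (LEAST e. \<forall>d. R f e d)"
proof -
  define E where "E = (LEAST e. \<forall>d. R f e d)"
  have E: "\<forall>d. R f E d"
    unfolding E_def using witness by (rule LeastI)
  have unrefuted: "\<not> refutes R (map f [0..<n]) E" for n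
    using E by (auto simp: refutes_prefix_iff)
  have "\<forall>\<^sub>F n in sequentially. refutes R (map f [0..<n]) e" if "e < E" for e
  proof -
    obtain d where d: "\<not> R f e d"
      using not_less_Least[OF \<open>e < E\<close>[unfolded E_def]] by blast
    from determined[of e d] show ?thesis
      unfolding determined_by_prefix_def refutes_prefix_iff
      by (rule eventually_mono) (use d in blast)
  qed
  then have "\<forall>\<^sub>F n in sequentially. \<forall>e\<in>{..<E}. refutes R (map f [0..<n]) e"
    by (intro eventually_ball_finite) auto
  then show ?thesis
    unfolding E_def[symmetric]
  proof (rule eventually_mono)
    fix n
    assume refuted: "\<forall>e\<in>{..<E}. refutes R (map f [0..<n]) e"
    show "(LEAST e. \<not> refutes R (map f [0..<n]) e) = E"
    proof (rule Least_equality)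
      show "\<not> refutes R (map f [0..<n]) E"
        by (rule unrefuted)
      show "E \<le> e" if "\<not> refutes R (map f [0..<n]) e" for e
        using refuted that leI by blast
    qed
  qed
qed

lemma guessable_if_Sigma2_and_compl_Sigma2:
  fixes P Q :: "(nat \<Rightarrow> nat) \<Rightarrow> nat \<Rightarrow> 'd \<Rightarrow> bool"
  assumes "\<And>f e d. determined_by_prefix (\<lambda>g. P g e d) f"
    and "\<And>f e d. determined_by_prefix (\<lambda>g. Q g e d) f"
    and in_S: "\<And>f. f \<in> S \<longleftrightarrow> (\<exists>e. \<forall>d. P f e d)"
    and not_in_S: "\<And>f. f \<notin> S \<longleftrightarrow> (\<exists>e. \<forall>d. Q f e d)"
  shows "guessable S"
proof -
  define R where "R g e d = (if even e then P g (e div 2) d else Q g (e div 2) d)" for g e d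
  define G where "G \<sigma> = (if even (LEAST e. \<not> refutes R \<sigma> e) then 1 else 0 :: nat)" for \<sigma>
  have determined: "determined_by_prefix (\<lambda>g. R g e d) f" for f e d
    using assms(1,2) by (cases "even e") (simp_all add: R_def)
  have "\<exists>m>0. \<forall>n>m. G (map f [0..<Suc n]) = (if f \<in> S then 1 else 0)" for f
  proof -
    have "\<exists>e\<^sub>0. \<forall>d. R f e\<^sub>0 d"
    proof (cases "f \<in> S")
      case True
      then obtain e where "\<forall>d. P f e d" using in_S by blast
      then have "\<forall>d. R f (2 * e) d" by (simp add: R_def)
      then show ?thesis ..
    next
      case False
      then obtain e where "\<forall>d. Q f e d" using not_in_S by blast
      then have "\<forall>d. R f (2 * e + 1) d" by (simp add: R_def)
      then show ?thesis ..
    qed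
    then obtain e\<^sub>0 where witness: "\<forall>d. R f e\<^sub>0 d" ..
    define E where "E = (LEAST e. \<forall>d. R f e d)"
    have "\<forall>d. R f E d"
      unfolding E_def using witness by (rule LeastI)
    then have parity: "even E \<longleftrightarrow> f \<in> S"
    proof (cases "even E")
      case True
      with \<open>\<forall>d. R f E d\<close> have "\<forall>d. P f (E div 2) d" by (simp add: R_def)
      with True in_S show ?thesis by blast
    next
      case False
      with \<open>\<forall>d. R f E d\<close> have "\<forall>d. Q f (E div 2) d" by (simp add: R_def)
      with False not_in_S show ?thesis by blast
    qed
    obtain m where "\<forall>n\<ge>m. (LEAST e. \<not> refutes R (map f [0..<n]) e) = E"
      using eventually_Least_unrefuted[of R f, OF determined witness]
      unfolding E_def eventually_sequentially by blast
    then have "\<forall>n>Suc m. G (map f [0..<Suc n]) = (if f \<in> S then 1 else 0)"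
      using parity by (simp add: G_def del: upt_Suc)
    then show ?thesis by blast
  qed
  then have "guesser G S"
    by (simp add: guesser_def G_def)
  then show ?thesis
    unfolding guessable_def by blast
qed

lemma defines_setD: "defines_set \<phi> S \<Longrightarrow> sat f s \<phi> \<longleftrightarrow> f \<in> S"
  by (simp add: defines_set_def)

theorem mainTheorem8:
  fixes S :: "(nat \<Rightarrow> nat) set"
  assumes "\<exists>x y \<phi>. qfree \<phi> \<and> defines_set (All x (Ex y \<phi>)) S"
    and "\<exists>x y \<psi>. qfree \<psi> \<and> defines_set (Ex x (All y \<psi>)) S"
  shows "guessable S"
proof -
  obtain x y \<phi> where \<phi>: "qfree \<phi>" "defines_set (All x (Ex y \<phi>)) S"
    using assms(1) by blast
  obtain x' y' \<psi> where \<psi>: "qfree \<psi>" "defines_set (Ex x' (All y' \<psi>)) S"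
    using assms(2) by blast
  let ?s = "\<lambda>_. 0 :: nat"
  show ?thesis
  proof (rule guessable_if_Sigma2_and_compl_Sigma2
      [where P = "\<lambda>g e d. sat g (?s(x' := e, y' := d)) \<psi>"
         and Q = "\<lambda>g e d. \<not> sat g (?s(x := e, y := d)) \<phi>"])
    show "determined_by_prefix (\<lambda>g. sat g (?s(x' := e, y' := d)) \<psi>) f" for f e d
      using \<psi>(1) by (rule determined_by_prefix_sat)
    show "determined_by_prefix (\<lambda>g. \<not> sat g (?s(x := e, y := d)) \<phi>) f" for f e d
      using \<phi>(1) by (intro determined_by_prefix_comp[where h = Not] determined_by_prefix_sat)
    show "f \<in> S \<longleftrightarrow> (\<exists>e. \<forall>d. sat f (?s(x' := e, y' := d)) \<psi>)" for f
      using defines_setD[OF \<psi>(2), of f ?s] by simp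
    show "f \<notin> S \<longleftrightarrow> (\<exists>e. \<forall>d. \<not> sat f (?s(x := e, y := d)) \<phi>)" for f
      using defines_setD[OF \<phi>(2), of f ?s] by auto
  qed
qed

end
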